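(* There is an absolute constant $c>0$ such that for all positive integers $t,N$ with $t\le \frac{N^{2(e^4-1)}}{36}$, $$\inf_{\rho}\ \sup_{R}\ \mathbb{E}\big[W_1(R,\rho(\mathbf S))\big]\ \ge\ c\max\Big\{\frac1t,\ \frac{1}{\sqrt{t\log N}}\Big\},$$ where the supremum is over all probability distributions $R$ on $[0,1]^2$ and the infimum is over all estimators $\rho$ mapping the sample $\mathbf S$ to a probability distribution on $[0,1]^2$.
   Context: Sampling model: given a probability distribution $R$ on $[0,1]^2$ and positive integers $N,t$, draw $(p_i,q_i)\sim R$ independently for $i=1,\dots,N$, and then, independently given these, $X_i\sim \mathrm{Binomial}(t,p_i)$ and $Y_i\sim\mathrm{Binomial}(t,q_i)$. The observed sample is $\mathbf S=\{(X_i,Y_i)\}_{i=1}^N$. $W_1$ denotes the Wasserstein-1 distance on $[0,1]^2$ (Euclidean metric): $W_1(P,Q)=\sup_{f}\int f\,(dP-dQ)$ over all $1$-Lipschitz $f:[0,1]^2\to\mathbb R$. *)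

theory Defs
  imports "HOL-Analysis.Analysis" "HOL-Probability.Probability"
begin

text \<open>The unit square [0,1]^2 (product metric on real \<times> real is Euclidean).\<close>
definition unit_sq :: "(real \<times> real) set" where
  "unit_sq = {0..1} \<times> {0..1}"

definition sq_dist :: "(real \<times> real) measure \<Rightarrow> bool" where
  "sq_dist M \<longleftrightarrow> prob_space M \<and> sets M = sets (borel :: (real \<times> real) measure)
     \<and> emeasure M unit_sq = 1"

text \<open>Wasserstein-1 distance (Kantorovich-Rubinstein dual form).  Every 1-Lipschitz
  function on the square extends to a 1-Lipschitz function on R^2 (McShane),
  so taking the sup over globally 1-Lipschitz functions is the same.\<close>
definition W1 :: "(real \<times> real) measure \<Rightarrow> (real \<times> real) measure \<Rightarrow> real" where
  "W1 P Q = Sup {(\<integral>z. f z \<partial>P) - (\<integral>z. f z \<partial>Q) | f. lipschitz_on 1 UNIV f}"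

text \<open>Binomial(t,p) probability mass at k (written out so it is a polynomial in p).\<close>
definition binom_prob :: "nat \<Rightarrow> real \<Rightarrow> nat \<Rightarrow> real" where
  "binom_prob t p k = real (t choose k) * p ^ k * (1 - p) ^ (t - k)"

text \<open>Probability that a single observation (X_i,Y_i) equals (x,y):
  (p,q) ~ R, then X ~ Bin(t,p), Y ~ Bin(t,q) independently.\<close>
definition obs_prob :: "(real \<times> real) measure \<Rightarrow> nat \<Rightarrow> nat \<Rightarrow> nat \<Rightarrow> real" where
  "obs_prob R t x y = (\<integral>z. binom_prob t (fst z) x * binom_prob t (snd z) y \<partial>R)"

definition sample_prob :: "(real \<times> real) measure \<Rightarrow> nat \<Rightarrow> (nat \<times> nat) list \<Rightarrow> real" where
  "sample_prob R t s = prod_list (map (\<lambda>(x, y). obs_prob R t x y) s)"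

definition samples :: "nat \<Rightarrow> nat \<Rightarrow> (nat \<times> nat) list set" where
  "samples t N = {s. length s = N \<and> set s \<subseteq> {0..t} \<times> {0..t}}"

definition risk :: "nat \<Rightarrow> nat \<Rightarrow> (real \<times> real) measure
                     \<Rightarrow> ((nat \<times> nat) list \<Rightarrow> (real \<times> real) measure) \<Rightarrow> real" where
  "risk t N R \<rho> = (\<Sum>s\<in>samples t N. sample_prob R t s * W1 R (\<rho> s))"

definition estimator :: "((nat \<times> nat) list \<Rightarrow> (real \<times> real) measure) \<Rightarrow> bool" where
  "estimator \<rho> \<longleftrightarrow> (\<forall>s. sq_dist (\<rho> s))"

end

theory Submission
  imports Defs
begin

text \<open>Le Cam's two-point method. Put the weights of Binomial(L-1, 1/2) on the equally spaced
  nodes 1/2 - a + 2ak/L (k = 0..L) of the first coordinate axis, rounding the index b up to an even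
  resp. odd node. The two priors differ by the signed measure with weights
  (-1)^k (L choose k) / 2^(L-1), which annihilates all polynomials of degree < L, so their first L-1
  moments agree. Consequently the induced laws of one observation are close: expanding in the
  chi-square geometry of Binomial(t, 1/2), their L1 distance is at most
  2 sqrt(\<Sum>m\<ge>L. (t choose m) (4a^2)^m), and over N observations it stays below 1 once
  L \<approx> 2 ln N and a^2 \<approx> L/(4e^2 t). On the other hand the distance to the odd nodes is a
  1-Lipschitz test separating the priors by 2a/L \<approx> 1/sqrt(t ln N). The rate 1/t comes from
  L = t + 1, a = 1/2, where the laws of the observations coincide.\<close>

section \<open>Alternating binomial sums and binomial mixtures\<close>

lemma alternating_binomial_sum_Suc:
  fixes f :: "nat \<Rightarrow> real"
  shows "(\<Sum>k\<le>Suc n. (-1)^k * real (Suc n choose k) * f k)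
       = (\<Sum>k\<le>n. (-1)^k * real (n choose k) * (f k - f (Suc k)))"
proof -
  have "(\<Sum>k\<le>Suc n. (-1)^k * real (Suc n choose k) * f k)
      = (-1)^0 * real (Suc n choose 0) * f 0 + (\<Sum>k\<le>n. (-1)^(Suc k) * real (Suc n choose Suc k) * f (Suc k))"
    by (subst sum.atMost_Suc_shift) simp
  also have "\<dots> = f 0 + (\<Sum>k\<le>n. (-1)^(Suc k) * real (n choose k) * f (Suc k))
       + (\<Sum>k\<le>n. (-1)^(Suc k) * real (n choose Suc k) * f (Suc k))"
    by (simp add: sum.distrib[symmetric] algebra_simps)
  also have "(\<Sum>k\<le>n. (-1)^(Suc k) * real (n choose Suc k) * f (Suc k))
      = (\<Sum>k\<le>Suc n. (-1)^k * real (n choose k) * f k) - f 0"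
    by (subst sum.atMost_Suc_shift[of _ n]) simp
  also have "(\<Sum>k\<le>Suc n. (-1)^k * real (n choose k) * f k) = (\<Sum>k\<le>n. (-1)^k * real (n choose k) * f k)"
    by simp
  finally show ?thesis by (simp add: sum.distrib sum_subtractf sum_negf algebra_simps)
qed

lemma alternating_binomial_sum_power_eq_0:
  fixes \<alpha> \<beta> :: real
  shows "m < L \<Longrightarrow> (\<Sum>k\<le>L. (-1)^k * real (L choose k) * (\<alpha> + \<beta> * real k)^m) = 0"
proof (induction L arbitrary: m \<alpha>)
  case 0 then show ?case by simp
next
  case (Suc n)
  have step: "(\<alpha> + \<beta> * real k)^m - (\<alpha> + \<beta> * real (Suc k))^m
      = - (\<Sum>j<m. real (m choose j) * \<beta>^(m-j) * (\<alpha> + \<beta> * real k)^j)" for k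
  proof -
    have "(\<alpha> + \<beta> * real (Suc k))^m = ((\<alpha> + \<beta> * real k) + \<beta>)^m" by (simp add: algebra_simps)
    also have "\<dots> = (\<Sum>j\<le>m. real (m choose j) * (\<alpha> + \<beta> * real k)^j * \<beta>^(m-j))"
      by (subst binomial_ring) simp
    also have "\<dots> = (\<Sum>j<m. real (m choose j) * (\<alpha> + \<beta> * real k)^j * \<beta>^(m-j)) + (\<alpha> + \<beta> * real k)^m"
      by (simp add: lessThan_Suc_atMost[symmetric])
    finally show ?thesis by (simp add: algebra_simps)
  qed
  have "(\<Sum>k\<le>Suc n. (-1)^k * real (Suc n choose k) * (\<alpha> + \<beta> * real k)^m)
     = (\<Sum>k\<le>n. (-1)^k * real (n choose k) * (- (\<Sum>j<m. real (m choose j) * \<beta>^(m-j) * (\<alpha> + \<beta> * real k)^j)))"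
    by (subst alternating_binomial_sum_Suc, intro sum.cong refl, subst step, simp)
  also have "\<dots> = - (\<Sum>j<m. real (m choose j) * \<beta>^(m-j) * (\<Sum>k\<le>n. (-1)^k * real (n choose k) * (\<alpha> + \<beta> * real k)^j))"
    by (simp add: sum_distrib_left sum_negf algebra_simps sum.swap[of _ "{..n}"])
  also have "\<dots> = 0"
    using Suc.IH Suc.prems by (intro iffD2[OF neg_equal_0_iff_equal] sum.neutral) auto
  finally show ?case .
qed

lemma binom_prob_nonneg: "0 \<le> p \<Longrightarrow> p \<le> 1 \<Longrightarrow> 0 \<le> binom_prob t p k"
  unfolding binom_prob_def by simp

lemma sum_binom_prob: "(\<Sum>x\<le>t. binom_prob t p x) = 1"
  unfolding binom_prob_def using binomial_ring[of p "1-p" t] by (simp add: mult.assoc)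

lemma binom_prob_le_1:
  assumes "0 \<le> p" "p \<le> 1"
  shows "binom_prob t p k \<le> 1"
proof (cases "k \<le> t")
  case True
  then have "binom_prob t p k \<le> (\<Sum>x\<le>t. binom_prob t p x)"
    using assms by (intro member_le_sum binom_prob_nonneg) auto
  then show ?thesis by (simp add: sum_binom_prob)
next
  case False then show ?thesis by (simp add: binom_prob_def binomial_eq_0)
qed

lemma binom_prob_0: "binom_prob t 0 y = (if y = 0 then 1 else 0)"
  unfolding binom_prob_def by simp

text \<open>The chi-square kernel of Binomial(t, 1/2 + u) and Binomial(t, 1/2 + w) relative to
  Binomial(t, 1/2), whose mass at x is (t choose x) / 2^t.\<close>
lemma sum_binom_prob_product_over_half:
  fixes u w :: real
  shows "(\<Sum>x\<le>t. binom_prob t (1/2+u) x * binom_prob t (1/2+w) x * 2^t / real (t choose x))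
     = (1 + 4*u*w)^t"
proof -
  have summand: "binom_prob t p x * binom_prob t q x * 2^t / real (t choose x)
       = real (t choose x) * (2*p*q)^x * (2*(1-p)*(1-q))^(t-x)" if "x \<le> t" for p q :: real and x
  proof -
    have c: "real (t choose x) > 0" using that by simp
    have e: "(2::real)^t = 2^x * 2^(t-x)" using that by (simp add: power_add[symmetric])
    have "binom_prob t p x * binom_prob t q x * 2^t / real (t choose x)
       = real (t choose x) * (2^x*p^x*q^x) * (2^(t-x)*(1-p)^(t-x)*(1-q)^(t-x))"
      unfolding binom_prob_def e using c by (simp add: field_simps)
    then show ?thesis by (simp only: power_mult_distrib)
  qed
  have "(\<Sum>x\<le>t. binom_prob t (1/2+u) x * binom_prob t (1/2+w) x * 2^t / real (t choose x))
     = (\<Sum>x\<le>t. real (t choose x) * (2*(1/2+u)*(1/2+w))^x * (2*(1-(1/2+u))*(1-(1/2+w)))^(t-x))"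
    by (intro sum.cong refl summand) auto
  also have "\<dots> = (2*(1/2+u)*(1/2+w) + 2*(1-(1/2+u))*(1-(1/2+w)))^t"
    by (subst binomial_ring) (simp add: mult.assoc)
  also have "2*(1/2+u)*(1/2+w) + 2*(1-(1/2+u))*(1-(1/2+w)) = 1 + 4*u*w"
    by (simp add: algebra_simps)
  finally show ?thesis .
qed

definition node :: "nat \<Rightarrow> real \<Rightarrow> nat \<Rightarrow> real" where
  "node L a k = -a + real k * (2*a/real L)"

definition alt_binom :: "nat \<Rightarrow> nat \<Rightarrow> real" where
  "alt_binom L k = (-1)^k * real (L choose k)"

definition mixture_diff :: "nat \<Rightarrow> nat \<Rightarrow> real \<Rightarrow> nat \<Rightarrow> real" where
  "mixture_diff t L a x = (\<Sum>k\<le>L. alt_binom L k * binom_prob t (1/2 + node L a k) x)"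

lemma abs_node_le:
  assumes "k \<le> L" "1 \<le> L" "0 \<le> a"
  shows "\<bar>node L a k\<bar> \<le> a"
proof -
  have "real k * (2*a/real L) \<le> 2*a"
    using assms by (simp add: field_simps mult_left_mono)
  moreover have "0 \<le> real k * (2*a/real L)" using assms by simp
  ultimately show ?thesis unfolding node_def by linarith
qed

lemma node_moment_eq_0:
  assumes "m < L"
  shows "(\<Sum>k\<le>L. alt_binom L k * node L a k ^ m) = 0"
  using alternating_binomial_sum_power_eq_0[OF assms, of "-a" "2*a/real L"]
  unfolding alt_binom_def node_def by (simp add: mult.commute)

lemma abs_node_moment_le:
  assumes "1 \<le> L" "0 \<le> a"
  shows "\<bar>\<Sum>k\<le>L. alt_binom L k * node L a k ^ m\<bar> \<le> 2^L * a^m"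
proof -
  have "\<bar>\<Sum>k\<le>L. alt_binom L k * node L a k ^ m\<bar> \<le> (\<Sum>k\<le>L. \<bar>alt_binom L k * node L a k ^ m\<bar>)"
    by (rule sum_abs)
  also have "\<dots> \<le> (\<Sum>k\<le>L. real (L choose k) * a^m)"
  proof (intro sum_mono)
    fix k assume "k \<in> {..L}"
    then have "\<bar>node L a k\<bar>^m \<le> a^m" using abs_node_le assms by (intro power_mono) auto
    then show "\<bar>alt_binom L k * node L a k ^ m\<bar> \<le> real (L choose k) * a^m"
      unfolding alt_binom_def by (simp add: abs_mult power_abs mult_left_mono)
  qed
  also have "\<dots> = 2^L * a^m"
    using choose_row_sum[of L] by (simp add: sum_distrib_right[symmetric] flip: of_nat_sum)
  finally show ?thesis .
qed

lemma chi2_mixture_diff_eq: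
  "(\<Sum>x\<le>t. (mixture_diff t L a x)^2 * 2^t / real (t choose x))
     = (\<Sum>m\<le>t. real (t choose m) * 4^m * (\<Sum>k\<le>L. alt_binom L k * node L a k ^ m)^2)"
proof -
  have binom: "(1 + 4 * y1 * y2)^t = (\<Sum>m\<le>t. real (t choose m) * 4^m * (y1^m * y2^m))" for y1 y2 :: real
    using binomial_ring[of "4*y1*y2" "1" "t"] by (simp add: add.commute power_mult_distrib mult_ac)
  have "(\<Sum>x\<le>t. (mixture_diff t L a x)^2 * 2^t / real (t choose x))
     = (\<Sum>x\<le>t. \<Sum>k\<le>L. \<Sum>l\<le>L. alt_binom L k * alt_binom L l *
          (binom_prob t (1/2 + node L a k) x * binom_prob t (1/2 + node L a l) x * 2^t / real (t choose x)))"
    apply (intro sum.cong refl)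
    unfolding mixture_diff_def power2_eq_square sum_product
    unfolding sum_distrib_right sum_divide_distrib
    by (simp add: mult_ac)
  also have "\<dots> = (\<Sum>k\<le>L. \<Sum>l\<le>L. alt_binom L k * alt_binom L l *
          (\<Sum>x\<le>t. binom_prob t (1/2 + node L a k) x * binom_prob t (1/2 + node L a l) x * 2^t / real (t choose x)))"
    by (simp add: sum_distrib_left sum.swap[of _ "{..t}"])
  also have "\<dots> = (\<Sum>k\<le>L. \<Sum>l\<le>L. alt_binom L k * alt_binom L l * (1 + 4 * node L a k * node L a l)^t)"
    by (simp add: sum_binom_prob_product_over_half)
  also have "\<dots> = (\<Sum>m\<le>t. real (t choose m) * 4^m * (\<Sum>k\<le>L. alt_binom L k * node L a k ^ m)^2)"
    unfolding binom power2_eq_square sum_product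
    by (simp add: sum_distrib_left sum.swap[of _ "{..t}"] mult_ac)
  finally show ?thesis .
qed

lemma moment_term_le:
  assumes "1 \<le> L" "0 \<le> a"
  shows "real (t choose m) * 4^m * (\<Sum>k\<le>L. alt_binom L k * node L a k ^ m)^2
    \<le> (if L \<le> m then 4^L * (real (t choose m) * (4*a^2)^m) else 0)"
proof (cases "L \<le> m")
  case True
  have "(\<Sum>k\<le>L. alt_binom L k * node L a k ^ m)^2 \<le> (2^L * a^m)^2"
    using abs_node_moment_le[OF assms, of m] assms(2)
    by (metis abs_le_square_iff abs_of_nonneg zero_le_mult_iff zero_le_numeral zero_le_power)
  then have "real (t choose m) * 4^m * (\<Sum>k\<le>L. alt_binom L k * node L a k ^ m)^2
      \<le> real (t choose m) * 4^m * (2^L * a^m)^2"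
    by (intro mult_left_mono) auto
  also have "\<dots> = 4^L * (real (t choose m) * (4*a^2)^m)"
  proof -
    have "((2::real)^L)^2 = 4^L" by (simp add: power2_eq_square power_mult_distrib[symmetric])
    moreover have "(a^2)^m = (a^m)^2" by (simp add: power_mult[symmetric] mult.commute)
    ultimately show ?thesis by (simp add: power_mult_distrib mult_ac)
  qed
  finally show ?thesis using True by simp
next
  case False then show ?thesis using node_moment_eq_0[of m L a] by simp
qed

lemma chi2_mixture_diff_le_tail:
  assumes "1 \<le> L" "0 \<le> a"
  shows "(\<Sum>x\<le>t. (mixture_diff t L a x)^2 * 2^t / real (t choose x))
      \<le> 4^L * (\<Sum>m\<in>{L..t}. real (t choose m) * (4*a^2)^m)"
proof -
  have "(\<Sum>m\<le>t. real (t choose m) * 4^m * (\<Sum>k\<le>L. alt_binom L k * node L a k ^ m)^2)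
     \<le> (\<Sum>m\<le>t. if L \<le> m then 4^L * (real (t choose m) * (4*a^2)^m) else 0)"
    by (intro sum_mono moment_term_le[OF assms])
  also have "\<dots> = (\<Sum>m\<in>{m\<in>{..t}. L \<le> m}. 4^L * (real (t choose m) * (4*a^2)^m))"
    by (rule sum.inter_filter[symmetric]) simp
  also have "{m\<in>{..t}. L \<le> m} = {L..t}" by auto
  finally show ?thesis unfolding chi2_mixture_diff_eq by (simp add: sum_distrib_left)
qed

text \<open>Cauchy-Schwarz against the weights (t choose x) / 2^t turns the chi-square bound into an
  L1 bound.\<close>
lemma sum_abs_mixture_diff_le:
  assumes "1 \<le> L" "0 \<le> a"
  shows "(\<Sum>x\<le>t. \<bar>mixture_diff t L a x\<bar>) \<le> 2^L * sqrt (\<Sum>m\<in>{L..t}. real (t choose m) * (4*a^2)^m)"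
proof -
  define E where "E = (\<Sum>m\<in>{L..t}. real (t choose m) * (4*a^2)^m)"
  let ?p = "\<lambda>x. sqrt (real (t choose x) / 2^t)"
  let ?q = "\<lambda>x. \<bar>mixture_diff t L a x\<bar> * sqrt (2^t / real (t choose x))"
  have pq: "?p x * ?q x = \<bar>mixture_diff t L a x\<bar>" if "x \<le> t" for x
  proof -
    have "real (t choose x) > 0" using that by simp
    then have "sqrt (real (t choose x) / 2^t) * sqrt (2^t / real (t choose x)) = 1"
      by (simp add: real_sqrt_mult[symmetric])
    then show ?thesis by (simp add: mult_ac)
  qed
  have "(\<Sum>x\<le>t. \<bar>mixture_diff t L a x\<bar>) = (\<Sum>x\<le>t. ?p x * ?q x)"
    using pq by (intro sum.cong) auto
  then have "(\<Sum>x\<le>t. \<bar>mixture_diff t L a x\<bar>)^2 = (\<Sum>x\<le>t. ?p x * ?q x)^2"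
    by simp
  also have "\<dots> \<le> (\<Sum>x\<le>t. (?p x)^2) * (\<Sum>x\<le>t. (?q x)^2)"
    by (rule Cauchy_Schwarz_ineq_sum)
  also have "(\<Sum>x\<le>t. (?p x)^2) = 1"
    using choose_row_sum[of t] by (simp add: sum_divide_distrib[symmetric] flip: of_nat_sum)
  also have "(\<Sum>x\<le>t. (?q x)^2) = (\<Sum>x\<le>t. (mixture_diff t L a x)^2 * 2^t / real (t choose x))"
    by (simp add: power_mult_distrib)
  also have "\<dots> \<le> 4^L * E"
    unfolding E_def by (rule chi2_mixture_diff_le_tail[OF assms])
  finally have "(\<Sum>x\<le>t. \<bar>mixture_diff t L a x\<bar>) \<le> sqrt (4^L * E)"
    by (intro real_le_rsqrt) simp
  also have "sqrt (4^L * E) = 2^L * sqrt E"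
    by (simp add: real_sqrt_mult real_sqrt_power)
  finally show ?thesis unfolding E_def .
qed

section \<open>Product distributions\<close>

definition lists_of_length :: "'a set \<Rightarrow> nat \<Rightarrow> 'a list set" where
  "lists_of_length A n = {s. length s = n \<and> set s \<subseteq> A}"

lemma lists_of_length_0: "lists_of_length A 0 = {[]}"
  unfolding lists_of_length_def by auto

lemma sum_lists_of_length_Suc:
  assumes "finite A"
  shows "(\<Sum>s\<in>lists_of_length A (Suc n). f s) = (\<Sum>a\<in>A. \<Sum>s\<in>lists_of_length A n. f (a # s))"
proof -
  have Suc: "lists_of_length A (Suc n) = (\<lambda>(a, s). a # s) ` (A \<times> lists_of_length A n)"
    unfolding lists_of_length_def by (auto simp: length_Suc_conv)
  have inj: "inj_on (\<lambda>(a, s). a # s) (A \<times> lists_of_length A n)" by (auto simp: inj_on_def)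
  have "(\<Sum>s\<in>lists_of_length A (Suc n). f s) = (\<Sum>p\<in>A \<times> lists_of_length A n. f (fst p # snd p))"
    unfolding Suc by (subst sum.reindex[OF inj]) (auto intro!: sum.cong)
  also have "\<dots> = (\<Sum>a\<in>A. \<Sum>s\<in>lists_of_length A n. f (a # s))"
    by (simp add: sum.cartesian_product split_def)
  finally show ?thesis .
qed

lemma sum_prod_list_lists_of_length:
  assumes "finite A"
  shows "(\<Sum>s\<in>lists_of_length A n. prod_list (map u s)) = (\<Sum>a\<in>A. u a :: real) ^ n"
proof (induction n)
  case 0 then show ?case by (simp add: lists_of_length_0)
next
  case (Suc n)
  then show ?case
    by (simp add: sum_lists_of_length_Suc[OF assms] sum_distrib_left[symmetric] sum_distrib_right[symmetric])
qed

lemma sum_abs_prod_list_diff_le: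
  assumes "finite A" "\<And>a. a \<in> A \<Longrightarrow> 0 \<le> (u a :: real)" "\<And>a. a \<in> A \<Longrightarrow> 0 \<le> v a"
    "(\<Sum>a\<in>A. u a) = 1" "(\<Sum>a\<in>A. v a) = 1"
  shows "(\<Sum>s\<in>lists_of_length A n. \<bar>prod_list (map u s) - prod_list (map v s)\<bar>)
    \<le> real n * (\<Sum>a\<in>A. \<bar>u a - v a\<bar>)"
proof (induction n)
  case 0 then show ?case by (simp add: lists_of_length_0)
next
  case (Suc n)
  define \<delta> where "\<delta> = (\<Sum>a\<in>A. \<bar>u a - v a\<bar>)"
  define U where "U s = prod_list (map u s)" for s
  define V where "V s = prod_list (map v s)" for s
  have "\<bar>u a * U s - v a * V s\<bar> \<le> \<bar>u a - v a\<bar> * U s + v a * \<bar>U s - V s\<bar>"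
    if "a \<in> A" "s \<in> lists_of_length A n" for a s
  proof -
    have "0 \<le> U s"
      using that assms(2) unfolding U_def lists_of_length_def by (intro prod_list_nonneg) auto
    moreover have "u a * U s - v a * V s = (u a - v a) * U s + v a * (U s - V s)"
      by (simp add: algebra_simps)
    ultimately show ?thesis
      using assms(3)[OF that(1)] by (simp add: abs_mult order_trans[OF abs_triangle_ineq])
  qed
  then have "(\<Sum>s\<in>lists_of_length A (Suc n). \<bar>U s - V s\<bar>)
      \<le> (\<Sum>a\<in>A. \<Sum>s\<in>lists_of_length A n. \<bar>u a - v a\<bar> * U s + v a * \<bar>U s - V s\<bar>)"
    unfolding sum_lists_of_length_Suc[OF assms(1)] by (simp add: U_def V_def sum_mono)
  also have "\<dots> = (\<Sum>a\<in>A. \<bar>u a - v a\<bar> * (\<Sum>s\<in>lists_of_length A n. U s))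
       + (\<Sum>a\<in>A. v a * (\<Sum>s\<in>lists_of_length A n. \<bar>U s - V s\<bar>))"
    by (simp add: sum.distrib sum_distrib_left)
  also have "\<dots> \<le> \<delta> + (\<Sum>a\<in>A. v a) * (real n * \<delta>)"
    unfolding U_def V_def sum_prod_list_lists_of_length[OF assms(1)] assms(4) sum_distrib_right
    using Suc assms(3) by (auto intro!: sum_mono mult_left_mono simp: \<delta>_def)
  finally show ?case using assms(5) by (simp add: U_def V_def \<delta>_def algebra_simps)
qed

section \<open>Distributions on the unit square and the sampling model\<close>

lemma unit_sq_sets: "unit_sq \<in> sets (borel :: (real \<times> real) measure)"
  unfolding unit_sq_def by (intro borel_closed closed_Times) auto

lemma AE_in_unit_sq:
  assumes "sq_dist P"
  shows "AE z in P. z \<in> unit_sq"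
proof -
  interpret prob_space P using assms by (simp add: sq_dist_def)
  have "prob unit_sq = 1" using assms by (simp add: sq_dist_def measure_def)
  then show ?thesis by (rule AE_prob_1)
qed

lemma integrable_sq_dist_bounded:
  assumes "sq_dist P" "continuous_on UNIV g" "AE z in P. \<bar>g z\<bar> \<le> B"
  shows "integrable P (g :: real \<times> real \<Rightarrow> real)"
proof -
  interpret prob_space P using assms by (simp add: sq_dist_def)
  have "sets P = sets borel" using assms by (simp add: sq_dist_def)
  then have "g \<in> borel_measurable P"
    using borel_measurable_continuous_onI[OF assms(2)] by (subst measurable_cong_sets[OF _ refl]) auto
  then show ?thesis using assms(3) by (intro integrable_const_bound[of _ B]) auto
qed

lemma lipschitz_integral_sq_dist:
  assumes "sq_dist P" "lipschitz_on 1 UNIV g"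
  shows "integrable P (g :: real \<times> real \<Rightarrow> real)" "\<bar>(\<integral>z. g z \<partial>P) - g (0,0)\<bar> \<le> 2"
proof -
  interpret prob_space P using assms by (simp add: sq_dist_def)
  have near_origin: "\<bar>g z - g (0,0)\<bar> \<le> 2" if "z \<in> unit_sq" for z
  proof -
    have "dist (g z) (g (0,0)) \<le> 1 * dist z (0,0)" by (rule lipschitz_onD[OF assms(2)]) auto
    also have "dist z (0,0) = norm z" by (cases z) (simp add: dist_Pair_Pair norm_Pair)
    also have "norm z \<le> 2"
      using that norm_Pair_le[of "fst z" "snd z"] unfolding unit_sq_def by auto
    finally show ?thesis by (simp add: dist_real_def)
  qed
  have ae: "AE z in P. \<bar>g z - g (0,0)\<bar> \<le> 2"
    using AE_in_unit_sq[OF assms(1)] by eventually_elim (rule near_origin)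
  then have "AE z in P. \<bar>g z\<bar> \<le> 2 + \<bar>g (0,0)\<bar>"
    by eventually_elim linarith
  then show ig: "integrable P g"
    using lipschitz_on_continuous_on[OF assms(2)] by (intro integrable_sq_dist_bounded[OF assms(1)])
  then have ig': "integrable P (\<lambda>z. g z - g (0,0))" by simp
  have "(\<integral>z. g z - g (0,0) \<partial>P) = (\<integral>z. g z \<partial>P) - g (0,0)"
    using ig by (simp add: prob_space)
  moreover have "(\<integral>z. g z - g (0,0) \<partial>P) \<le> 2"
    using ae by (intro integral_le_const[OF ig']) (auto elim: eventually_mono)
  moreover have "-2 \<le> (\<integral>z. g z - g (0,0) \<partial>P)"
    using ae by (intro integral_ge_const[OF ig']) (auto elim: eventually_mono)
  ultimately show "\<bar>(\<integral>z. g z \<partial>P) - g (0,0)\<bar> \<le> 2" by linarith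
qed

lemma integral_diff_le_4:
  fixes f :: "real \<times> real \<Rightarrow> real"
  assumes "sq_dist P" "sq_dist Q" "lipschitz_on 1 UNIV f"
  shows "(\<integral>z. f z \<partial>P) - (\<integral>z. f z \<partial>Q) \<le> 4"
  using lipschitz_integral_sq_dist(2)[OF assms(1,3)] lipschitz_integral_sq_dist(2)[OF assms(2,3)]
  by linarith

lemma W1_ge_integral_diff:
  assumes "sq_dist P" "sq_dist Q" "lipschitz_on 1 UNIV g"
  shows "(\<integral>z. g z \<partial>P) - (\<integral>z. g z \<partial>Q) \<le> W1 P Q"
  unfolding W1_def using assms integral_diff_le_4[OF assms(1,2)]
  by (intro cSup_upper bdd_aboveI[of _ 4]) blast+

lemma lipschitz_on_zero: "lipschitz_on 1 UNIV (\<lambda>z::real\<times>real. 0::real)"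
  by (rule lipschitz_onI) auto

lemma W1_nonneg:
  assumes "sq_dist P" "sq_dist Q"
  shows "0 \<le> W1 P Q"
  using W1_ge_integral_diff[OF assms lipschitz_on_zero] by simp

lemma W1_le_4:
  assumes "sq_dist P" "sq_dist Q"
  shows "W1 P Q \<le> 4"
  unfolding W1_def using lipschitz_on_zero integral_diff_le_4[OF assms]
  by (intro cSup_least) blast+

lemma continuous_on_binom_prob_pair:
  "continuous_on UNIV (\<lambda>z::real\<times>real. binom_prob t (fst z) x * binom_prob t (snd z) y)"
  unfolding binom_prob_def by (intro continuous_intros)

lemma AE_binom_prob_pair_bounds:
  assumes "sq_dist R"
  shows "AE z in R. 0 \<le> binom_prob t (fst z) x * binom_prob t (snd z) y \<and>
           binom_prob t (fst z) x * binom_prob t (snd z) y \<le> 1"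
  using AE_in_unit_sq[OF assms]
proof eventually_elim
  case (elim z)
  then have "0 \<le> fst z" "fst z \<le> 1" "0 \<le> snd z" "snd z \<le> 1" by (auto simp: unit_sq_def)
  then show ?case using binom_prob_nonneg binom_prob_le_1 by (metis mult_le_one mult_nonneg_nonneg)
qed

lemma integrable_binom_prob_pair:
  assumes "sq_dist R"
  shows "integrable R (\<lambda>z. binom_prob t (fst z) x * binom_prob t (snd z) y)"
proof (rule integrable_sq_dist_bounded[OF assms continuous_on_binom_prob_pair])
  show "AE z in R. \<bar>binom_prob t (fst z) x * binom_prob t (snd z) y\<bar> \<le> 1"
    using AE_binom_prob_pair_bounds[OF assms, of t x y] by eventually_elim auto
qed

lemma obs_prob_bounds:
  assumes "sq_dist R"
  shows "0 \<le> obs_prob R t x y" "obs_prob R t x y \<le> 1"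
proof -
  interpret prob_space R using assms by (simp add: sq_dist_def)
  note ig = integrable_binom_prob_pair[OF assms, of t x y]
  note ae = AE_binom_prob_pair_bounds[OF assms, of t x y]
  show "0 \<le> obs_prob R t x y" unfolding obs_prob_def
    using ae by (intro integral_ge_const[OF ig, of 0, simplified]) (auto elim: eventually_mono)
  show "obs_prob R t x y \<le> 1" unfolding obs_prob_def
    using ae by (intro integral_le_const[OF ig]) (auto elim: eventually_mono)
qed

lemma sum_obs_prob:
  assumes "sq_dist R"
  shows "(\<Sum>(x,y)\<in>{0..t}\<times>{0..t}. obs_prob R t x y) = 1"
proof -
  interpret prob_space R using assms by (simp add: sq_dist_def)
  have "(\<Sum>(x,y)\<in>{0..t}\<times>{0..t}. obs_prob R t x y)
      = (\<integral>z. (\<Sum>p\<in>{0..t}\<times>{0..t}. binom_prob t (fst z) (fst p) * binom_prob t (snd z) (snd p)) \<partial>R)"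
    unfolding obs_prob_def split_def
    by (subst Bochner_Integration.integral_sum) (simp_all add: integrable_binom_prob_pair[OF assms])
  also have "\<dots> = (\<integral>z. (\<Sum>x\<le>t. binom_prob t (fst z) x) * (\<Sum>y\<le>t. binom_prob t (snd z) y) \<partial>R)"
    by (simp add: sum_product sum.cartesian_product atLeast0AtMost split_def)
  finally show ?thesis by (simp add: sum_binom_prob prob_space)
qed

lemma prod_list_between_0_1:
  "\<forall>x\<in>set xs. 0 \<le> x \<and> x \<le> (1::real) \<Longrightarrow> 0 \<le> prod_list xs \<and> prod_list xs \<le> 1"
  by (induction xs) (auto intro: mult_le_one)

lemma sample_prob_bounds:
  assumes "sq_dist R"
  shows "0 \<le> sample_prob R t s" "sample_prob R t s \<le> 1"
proof -
  have "\<forall>x\<in>set (map (\<lambda>(x, y). obs_prob R t x y) s). 0 \<le> x \<and> x \<le> 1"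
    using obs_prob_bounds[OF assms] by auto
  from prod_list_between_0_1[OF this] show "0 \<le> sample_prob R t s" "sample_prob R t s \<le> 1"
    unfolding sample_prob_def by auto
qed

lemma risk_le:
  assumes "sq_dist R" "estimator \<rho>"
  shows "risk t N R \<rho> \<le> 4 * real (card (samples t N))"
proof -
  have "sample_prob R t s * W1 R (\<rho> s) \<le> 4" for s
  proof -
    have "sq_dist (\<rho> s)" using assms(2) by (simp add: estimator_def)
    then have "W1 R (\<rho> s) \<le> 4" "0 \<le> W1 R (\<rho> s)" using W1_le_4 W1_nonneg assms(1) by auto
    then show ?thesis
      using sample_prob_bounds[OF assms(1), of t s] mult_mono[of "sample_prob R t s" 1 "W1 R (\<rho> s)" 4]
      by simp
  qed
  then have "risk t N R \<rho> \<le> (\<Sum>s\<in>samples t N. 4)"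
    unfolding risk_def by (intro sum_mono)
  then show ?thesis by simp
qed

lemma risk_le_SUP:
  assumes "sq_dist R" "estimator \<rho>"
  shows "risk t N R \<rho> \<le> (SUP R\<in>{R. sq_dist R}. risk t N R \<rho>)"
proof (rule cSUP_upper)
  show "bdd_above ((\<lambda>R. risk t N R \<rho>) ` {R. sq_dist R})"
    using risk_le[OF _ assms(2)] by (intro bdd_aboveI[of _ "4 * real (card (samples t N))"]) auto
qed (use assms in simp)

lemma samples_eq_lists_of_length: "samples t N = lists_of_length ({0..t} \<times> {0..t}) N"
  unfolding samples_def lists_of_length_def by auto

lemma sum_sample_prob:
  assumes "sq_dist R"
  shows "(\<Sum>s\<in>samples t N. sample_prob R t s) = 1"
  unfolding samples_eq_lists_of_length sample_prob_def
  using sum_prod_list_lists_of_length[of "{0..t}\<times>{0..t}" "\<lambda>(x,y). obs_prob R t x y" N]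
    sum_obs_prob[OF assms] by simp

lemma sum_abs_sample_prob_diff_le:
  assumes "sq_dist R1" "sq_dist R2"
  shows "(\<Sum>s\<in>samples t N. \<bar>sample_prob R1 t s - sample_prob R2 t s\<bar>)
    \<le> real N * (\<Sum>(x,y)\<in>{0..t}\<times>{0..t}. \<bar>obs_prob R1 t x y - obs_prob R2 t x y\<bar>)"
  unfolding samples_eq_lists_of_length sample_prob_def split_def
  by (rule sum_abs_prod_list_diff_le)
     (use obs_prob_bounds[OF assms(1)] obs_prob_bounds[OF assms(2)] sum_obs_prob[OF assms(1)]
       sum_obs_prob[OF assms(2)] in \<open>auto simp: split_def\<close>)

section \<open>Le Cam's two-point method\<close>

lemma integral_diff_le_W1_add:
  assumes "sq_dist R1" "sq_dist R2" "sq_dist Q" "lipschitz_on 1 UNIV f"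
  shows "(\<integral>z. f z \<partial>R1) - (\<integral>z. f z \<partial>R2) \<le> W1 R1 Q + W1 R2 Q"
  using W1_ge_integral_diff[OF assms(1,3,4)] W1_ge_integral_diff[OF assms(2,3), of "\<lambda>z. - f z"] assms(4)
  by simp

lemma risk_nonneg:
  assumes "sq_dist R" "estimator \<rho>"
  shows "0 \<le> risk t N R \<rho>"
  unfolding risk_def using assms sample_prob_bounds(1)[OF assms(1)] W1_nonneg[OF assms(1)]
  by (auto simp: estimator_def intro!: sum_nonneg)

lemma sum_min_sample_prob_ge:
  assumes R1: "sq_dist R1" and R2: "sq_dist R2"
    and tv: "real N * (\<Sum>(x,y)\<in>{0..t}\<times>{0..t}. \<bar>obs_prob R1 t x y - obs_prob R2 t x y\<bar>) \<le> 1"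
  shows "1/2 \<le> (\<Sum>s\<in>samples t N. min (sample_prob R1 t s) (sample_prob R2 t s))"
proof -
  have "2 * min u v = u + v - \<bar>u - v\<bar>" for u v :: real
    by (simp add: min_def abs_if)
  then have "2 * (\<Sum>s\<in>samples t N. min (sample_prob R1 t s) (sample_prob R2 t s))
      = (\<Sum>s\<in>samples t N. sample_prob R1 t s) + (\<Sum>s\<in>samples t N. sample_prob R2 t s)
        - (\<Sum>s\<in>samples t N. \<bar>sample_prob R1 t s - sample_prob R2 t s\<bar>)"
    by (simp add: sum_distrib_left sum.distrib[symmetric] sum_subtractf[symmetric])
  also have "\<dots> \<ge> 1"
    using sum_sample_prob[OF R1] sum_sample_prob[OF R2] sum_abs_sample_prob_diff_le[OF R1 R2, of t N] tv
    by simp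
  finally show ?thesis by simp
qed

text \<open>Le Cam's two-point bound: on every sample the W1 errors against R1 and R2 add up to at
  least the separation H of the test f, and the sample laws overlap with mass 1/2.\<close>
lemma le_cam_two_point:
  assumes R1: "sq_dist R1" and R2: "sq_dist R2" and est: "estimator \<rho>"
    and lip: "lipschitz_on 1 UNIV f"
    and tv: "real N * (\<Sum>(x,y)\<in>{0..t}\<times>{0..t}. \<bar>obs_prob R1 t x y - obs_prob R2 t x y\<bar>) \<le> 1"
  shows "((\<integral>z. f z \<partial>R1) - (\<integral>z. f z \<partial>R2)) / 4 \<le> (SUP R\<in>{R. sq_dist R}. risk t N R \<rho>)"
proof (cases "0 \<le> (\<integral>z. f z \<partial>R1) - (\<integral>z. f z \<partial>R2)")
  case True
  define H where "H = (\<integral>z. f z \<partial>R1) - (\<integral>z. f z \<partial>R2)"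
  define P1 where "P1 s = sample_prob R1 t s" for s
  define P2 where "P2 s = sample_prob R2 t s" for s
  have pointwise: "min (P1 s) (P2 s) * H \<le> P1 s * W1 R1 (\<rho> s) + P2 s * W1 R2 (\<rho> s)" for s
  proof -
    have rs: "sq_dist (\<rho> s)" using est by (simp add: estimator_def)
    have "0 \<le> min (P1 s) (P2 s)"
      using sample_prob_bounds R1 R2 unfolding P1_def P2_def by auto
    then have "min (P1 s) (P2 s) * H \<le> min (P1 s) (P2 s) * (W1 R1 (\<rho> s) + W1 R2 (\<rho> s))"
      using integral_diff_le_W1_add[OF R1 R2 rs lip] unfolding H_def by (intro mult_left_mono)
    also have "\<dots> \<le> P1 s * W1 R1 (\<rho> s) + P2 s * W1 R2 (\<rho> s)"
      using W1_nonneg rs R1 R2 by (simp add: distrib_left add_mono mult_right_mono)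
    finally show ?thesis .
  qed
  have "H / 2 \<le> (\<Sum>s\<in>samples t N. min (P1 s) (P2 s)) * H"
    using mult_right_mono[OF sum_min_sample_prob_ge[OF R1 R2 tv] True]
    unfolding P1_def P2_def H_def by simp
  also have "\<dots> \<le> risk t N R1 \<rho> + risk t N R2 \<rho>"
    unfolding risk_def P1_def[symmetric] P2_def[symmetric] sum.distrib[symmetric] sum_distrib_right
    by (intro sum_mono pointwise)
  also have "\<dots> \<le> 2 * (SUP R\<in>{R. sq_dist R}. risk t N R \<rho>)"
    using risk_le_SUP[OF R1 est, of t N] risk_le_SUP[OF R2 est, of t N] by simp
  finally show ?thesis unfolding H_def by simp
next
  case False
  then show ?thesis
    using risk_nonneg[OF R1 est, of t N] risk_le_SUP[OF R1 est, of t N] by simp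
qed

section \<open>Two priors with matching moments\<close>

definition atom :: "nat \<Rightarrow> real \<Rightarrow> nat \<Rightarrow> real \<times> real" where
  "atom L a k = (1/2 + node L a k, 0)"

definition moment_prior :: "nat \<Rightarrow> real \<Rightarrow> (nat \<Rightarrow> nat) \<Rightarrow> (real \<times> real) measure" where
  "moment_prior L a \<phi> = distr (measure_pmf (binomial_pmf (L - 1) (1/2))) borel (\<lambda>b. atom L a (\<phi> b))"

definition round_even :: "nat \<Rightarrow> nat" where "round_even b = (if even b then b else Suc b)"
definition round_odd :: "nat \<Rightarrow> nat" where "round_odd b = (if odd b then b else Suc b)"

lemma sq_dist_moment_prior:
  assumes "\<And>b. b \<le> L - 1 \<Longrightarrow> \<phi> b \<le> L" "1 \<le> L" "0 \<le> a" "a \<le> 1/2"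
  shows "sq_dist (moment_prior L a \<phi>)"
proof -
  let ?B = "measure_pmf (binomial_pmf (L - 1) (1/2))"
  have m: "(\<lambda>b. atom L a (\<phi> b)) \<in> measurable ?B borel" by simp
  have "emeasure (moment_prior L a \<phi>) unit_sq = emeasure ?B ((\<lambda>b. atom L a (\<phi> b)) -` unit_sq \<inter> space ?B)"
    unfolding moment_prior_def by (rule emeasure_distr[OF m unit_sq_sets])
  also have "\<dots> = 1"
  proof (rule measure_pmf.emeasure_eq_1_AE)
    have "atom L a k \<in> unit_sq" if "k \<le> L" for k
      using abs_node_le[OF that assms(2,3)] assms(4) unfolding atom_def unit_sq_def by auto
    then show "AE b in ?B. b \<in> (\<lambda>b. atom L a (\<phi> b)) -` unit_sq \<inter> space ?B"
      unfolding AE_measure_pmf_iff using assms(1) by auto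
  qed simp
  finally show ?thesis
    using prob_space.prob_space_distr[OF prob_space_measure_pmf m]
    unfolding sq_dist_def moment_prior_def by simp
qed

lemma integral_moment_prior:
  assumes "g \<in> borel_measurable borel"
  shows "(\<integral>z. g z \<partial>moment_prior L a \<phi>)
    = (\<Sum>b\<le>L-1. g (atom L a (\<phi> b)) * (real (L - 1 choose b) / 2^(L-1)))"
proof -
  let ?B = "binomial_pmf (L - 1) (1/2)"
  have "(\<integral>z. g z \<partial>moment_prior L a \<phi>) = (\<integral>b. g (atom L a (\<phi> b)) \<partial>measure_pmf ?B)"
    unfolding moment_prior_def by (subst integral_distr[OF _ assms]) (simp_all add: comp_def)
  also have "\<dots> = (\<Sum>b\<le>L-1. g (atom L a (\<phi> b)) * pmf ?B b)"
    by (rule integral_measure_pmf_real) auto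
  also have "\<dots> = (\<Sum>b\<le>L-1. g (atom L a (\<phi> b)) * (real (L - 1 choose b) / 2^(L-1)))"
  proof (intro sum.cong refl)
    fix b assume "b \<in> {..L-1}"
    then have "(1/2::real)^b * (1 - 1/2)^(L - 1 - b) = 1 / 2^(L-1)"
      by (simp add: power_add[symmetric] power_one_over)
    then show "g (atom L a (\<phi> b)) * pmf ?B b = g (atom L a (\<phi> b)) * (real (L - 1 choose b) / 2^(L-1))"
      by (simp add: mult.assoc)
  qed
  finally show ?thesis .
qed

lemma obs_prob_moment_prior:
  "obs_prob (moment_prior L a \<phi>) t x y = (if y = 0 then
     (\<Sum>b\<le>L-1. binom_prob t (1/2 + node L a (\<phi> b)) x * (real (L - 1 choose b) / 2^(L-1))) else 0)"
proof -
  have "(\<lambda>z::real\<times>real. binom_prob t (fst z) x * binom_prob t (snd z) y) \<in> borel_measurable borel"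
    by (rule borel_measurable_continuous_onI[OF continuous_on_binom_prob_pair])
  then show ?thesis
    unfolding obs_prob_def by (subst integral_moment_prior) (auto simp: atom_def binom_prob_0)
qed

lemma binomial_average_round_even_minus_round_odd:
  fixes g :: "nat \<Rightarrow> real"
  shows "(\<Sum>b\<le>n. g (round_even b) * (real (n choose b) / 2^n))
       - (\<Sum>b\<le>n. g (round_odd b) * (real (n choose b) / 2^n))
     = (\<Sum>k\<le>Suc n. alt_binom (Suc n) k * g k) / 2^n"
proof -
  have "g (round_even b) * (real (n choose b) / 2^n) - g (round_odd b) * (real (n choose b) / 2^n)
      = (-1)^b * real (n choose b) * (g b - g (Suc b)) / 2^n" for b
    unfolding round_even_def round_odd_def by (cases "even b") (auto simp: field_simps)
  then have "(\<Sum>b\<le>n. g (round_even b) * (real (n choose b) / 2^n))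
       - (\<Sum>b\<le>n. g (round_odd b) * (real (n choose b) / 2^n))
      = (\<Sum>b\<le>n. (-1)^b * real (n choose b) * (g b - g (Suc b))) / 2^n"
    unfolding sum_subtractf[symmetric] sum_divide_distrib
    by (intro sum.cong refl)
  also have "\<dots> = (\<Sum>k\<le>Suc n. alt_binom (Suc n) k * g k) / 2^n"
    unfolding alt_binom_def by (subst alternating_binomial_sum_Suc) simp
  finally show ?thesis .
qed

lemma sum_abs_obs_prob_moment_prior_diff_le:
  assumes "1 \<le> L" "0 \<le> a"
  shows "(\<Sum>(x,y)\<in>{0..t}\<times>{0..t}.
      \<bar>obs_prob (moment_prior L a round_even) t x y - obs_prob (moment_prior L a round_odd) t x y\<bar>)
    \<le> 2 * sqrt (\<Sum>m\<in>{L..t}. real (t choose m) * (4*a^2)^m)"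
proof -
  obtain n where n: "L = Suc n" using assms(1) by (cases L) auto
  have "(\<Sum>(x,y)\<in>{0..t}\<times>{0..t}.
      \<bar>obs_prob (moment_prior L a round_even) t x y - obs_prob (moment_prior L a round_odd) t x y\<bar>)
    = (\<Sum>x\<le>t. \<bar>mixture_diff t L a x\<bar> / 2^n)"
    unfolding sum.cartesian_product[symmetric] obs_prob_moment_prior atLeast0AtMost
    using binomial_average_round_even_minus_round_odd[of "\<lambda>k. binom_prob t (1/2 + node L a k) _" n]
    by (simp add: n mixture_diff_def if_distrib cong: if_cong)
  also have "\<dots> \<le> 2^L * sqrt (\<Sum>m\<in>{L..t}. real (t choose m) * (4*a^2)^m) / 2^n"
    unfolding sum_divide_distrib[symmetric]
    using sum_abs_mixture_diff_le[OF assms, of t] by (rule divide_right_mono) simp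
  finally show ?thesis by (simp add: n)
qed

lemma lipschitz_on_infdist: "lipschitz_on 1 UNIV (\<lambda>z::real\<times>real. infdist z S)"
  by (rule lipschitz_onI) (auto simp: dist_real_def infdist_triangle_abs)

lemma dist_atom:
  assumes "1 \<le> L" "0 \<le> a"
  shows "dist (atom L a k) (atom L a j) = \<bar>real k - real j\<bar> * (2*a/real L)"
proof -
  have "dist (atom L a k) (atom L a j) = \<bar>node L a k - node L a j\<bar>"
    unfolding atom_def by (simp add: dist_Pair_Pair dist_real_def)
  also have "node L a k - node L a j = (real k - real j) * (2*a/real L)"
    unfolding node_def by (simp add: algebra_simps diff_divide_distrib)
  finally show ?thesis using assms by (simp add: abs_mult)
qed

definition odd_atoms :: "nat \<Rightarrow> real \<Rightarrow> (real \<times> real) set" where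
  "odd_atoms L a = atom L a ` {k. k \<le> L \<and> odd k}"

lemma infdist_even_atom_ge:
  assumes "1 \<le> L" "0 \<le> a" "even k"
  shows "2*a/real L \<le> infdist (atom L a k) (odd_atoms L a)"
proof -
  have ne: "odd_atoms L a \<noteq> {}" unfolding odd_atoms_def using assms(1) by (auto intro!: exI[of _ 1])
  have "2*a/real L \<le> dist (atom L a k) s" if "s \<in> odd_atoms L a" for s
  proof -
    from that obtain j where j: "odd j" "s = atom L a j" by (auto simp: odd_atoms_def)
    then have "k \<noteq> j" using assms(3) by auto
    then have "1 \<le> \<bar>real k - real j\<bar>" by linarith
    moreover have "0 \<le> 2*a/real L" using assms by simp
    ultimately have "2*a/real L \<le> \<bar>real k - real j\<bar> * (2*a/real L)"
      by (metis mult_le_cancel_right1 order.strict_iff_not)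
    then show ?thesis using j dist_atom[OF assms(1,2)] by simp
  qed
  then show ?thesis using infdist_notempty[OF ne] by (auto intro!: cINF_greatest[OF ne])
qed

lemma infdist_odd_atom_eq_0:
  assumes "odd k" "k \<le> L"
  shows "infdist (atom L a k) (odd_atoms L a) = 0"
  using assms unfolding odd_atoms_def by (intro infdist_zero) auto

lemma integral_infdist_moment_priors:
  assumes "1 \<le> L" "0 \<le> a"
  shows "2*a/real L \<le> (\<integral>z. infdist z (odd_atoms L a) \<partial>moment_prior L a round_even)"
    and "(\<integral>z. infdist z (odd_atoms L a) \<partial>moment_prior L a round_odd) = 0"
proof -
  obtain n where n: "L = Suc n" using assms(1) by (cases L) auto
  have m: "(\<lambda>z. infdist z (odd_atoms L a)) \<in> borel_measurable borel"
    by (intro borel_measurable_continuous_onI lipschitz_on_continuous_on[OF lipschitz_on_infdist])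
  have "(\<Sum>b\<le>n. real (n choose b) / 2^n) = 1"
    using choose_row_sum[of n] by (simp add: sum_divide_distrib[symmetric] flip: of_nat_sum)
  then have "2*a/real L = (\<Sum>b\<le>n. (2*a/real L) * (real (n choose b) / 2^n))"
    by (simp only: sum_distrib_left[symmetric])
  also have "\<dots> \<le> (\<Sum>b\<le>n. infdist (atom L a (round_even b)) (odd_atoms L a) * (real (n choose b) / 2^n))"
    using assms by (intro sum_mono mult_right_mono infdist_even_atom_ge) (auto simp: round_even_def)
  finally show "2*a/real L \<le> (\<integral>z. infdist z (odd_atoms L a) \<partial>moment_prior L a round_even)"
    using integral_moment_prior[OF m, of L a round_even] by (simp add: n)
  have "(\<integral>z. infdist z (odd_atoms L a) \<partial>moment_prior L a round_odd)
    = (\<Sum>b\<le>n. infdist (atom L a (round_odd b)) (odd_atoms L a) * (real (n choose b) / 2^n))"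
    using integral_moment_prior[OF m, of L a round_odd] by (simp add: n)
  also have "\<dots> = 0"
    by (intro sum.neutral ballI) (auto simp: n round_odd_def intro!: infdist_odd_atom_eq_0)
  finally show "(\<integral>z. infdist z (odd_atoms L a) \<partial>moment_prior L a round_odd) = 0" .
qed

lemma minimax_risk_ge_moment_matching:
  assumes L: "1 \<le> L" and a: "0 < a" "a \<le> 1/2" and est: "estimator \<rho>"
    and tail: "2 * real N * sqrt (\<Sum>m\<in>{L..t}. real (t choose m) * (4*a^2)^m) \<le> 1"
  shows "a / (2 * real L) \<le> (SUP R\<in>{R. sq_dist R}. risk t N R \<rho>)"
proof -
  let ?f = "\<lambda>z. infdist z (odd_atoms L a)"
  have R_even: "sq_dist (moment_prior L a round_even)"
    using a L by (intro sq_dist_moment_prior) (auto simp: round_even_def)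
  have R_odd: "sq_dist (moment_prior L a round_odd)"
    using a L by (intro sq_dist_moment_prior) (auto simp: round_odd_def)
  have "real N * (\<Sum>(x,y)\<in>{0..t}\<times>{0..t}.
      \<bar>obs_prob (moment_prior L a round_even) t x y - obs_prob (moment_prior L a round_odd) t x y\<bar>)
    \<le> real N * (2 * sqrt (\<Sum>m\<in>{L..t}. real (t choose m) * (4*a^2)^m))"
    using sum_abs_obs_prob_moment_prior_diff_le[OF L, of a t] a by (intro mult_left_mono) auto
  also have "\<dots> \<le> 1" using tail by (simp add: mult_ac)
  finally have "((\<integral>z. ?f z \<partial>moment_prior L a round_even) - (\<integral>z. ?f z \<partial>moment_prior L a round_odd)) / 4
      \<le> (SUP R\<in>{R. sq_dist R}. risk t N R \<rho>)"
    by (rule le_cam_two_point[OF R_even R_odd est lipschitz_on_infdist])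
  moreover have "a / (2 * real L)
      \<le> ((\<integral>z. ?f z \<partial>moment_prior L a round_even) - (\<integral>z. ?f z \<partial>moment_prior L a round_odd)) / 4"
    using integral_infdist_moment_priors[OF L] a L by (simp add: field_simps)
  ultimately show ?thesis by linarith
qed

section \<open>Choice of the parameters\<close>

lemma sum_binomial_tail_le_exp:
  fixes y c :: real
  assumes "0 \<le> y" "1 \<le> c"
  shows "(\<Sum>m\<in>{L..t}. real (t choose m) * y^m) \<le> exp (real t * c * y) / c^L"
proof -
  have "(\<Sum>m\<in>{L..t}. real (t choose m) * y^m) \<le> (\<Sum>m\<in>{L..t}. real (t choose m) * (c*y)^m / c^L)"
  proof (intro sum_mono)
    fix m assume "m \<in> {L..t}"
    then have "y^m * c^L \<le> y^m * c^m" using assms by (intro mult_left_mono power_increasing) auto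
    then have "y^m \<le> (c*y)^m / c^L" using assms by (simp add: field_simps)
    then show "real (t choose m) * y^m \<le> real (t choose m) * (c*y)^m / c^L"
      by (metis mult_left_mono of_nat_0_le_iff times_divide_eq_right)
  qed
  also have "\<dots> \<le> (\<Sum>m\<le>t. real (t choose m) * (c*y)^m / c^L)"
    using assms by (intro sum_mono2) auto
  also have "\<dots> = (1 + c*y)^t / c^L"
    using binomial_ring[of "c*y" 1 t] by (simp add: sum_divide_distrib add.commute)
  also have "\<dots> \<le> exp (c*y)^t / c^L"
    using assms by (intro divide_right_mono power_mono) (auto simp: add.commute)
  also have "exp (c*y)^t = exp (real t * c * y)"
    by (simp add: exp_of_nat_mult[symmetric] mult.assoc)
  finally show ?thesis .
qed

lemma exp_2_bounds: "4 \<le> exp (2::real)" "exp (2::real) \<le> 9"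
proof -
  have "exp (2::real) = exp 1 * exp 1" using exp_add[of "1::real" 1] by simp
  moreover have "2 \<le> exp (1::real)" using exp_ge_add_one_self[of 1] by simp
  ultimately show "4 \<le> exp (2::real)" "exp (2::real) \<le> 9"
    using exp_le mult_mono[of 2 "exp (1::real)" 2 "exp 1"] mult_mono[of "exp (1::real)" 3 "exp 1" 3]
    by simp_all
qed

lemma binomial_tail_le_inverse_sample_size:
  assumes N: "1 \<le> N" and L: "2 * ln (real N) + 2 \<le> real L"
    and a: "0 \<le> a" "4 * exp 2 * real t * a^2 = real L"
  shows "2 * real N * sqrt (\<Sum>m\<in>{L..t}. real (t choose m) * (4*a^2)^m) \<le> 1"
proof -
  define E where "E = (\<Sum>m\<in>{L..t}. real (t choose m) * (4*a^2)^m)"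
  have "E \<le> exp (real t * exp 2 * (4*a^2)) / exp 2 ^ L"
    unfolding E_def using exp_2_bounds(1) by (intro sum_binomial_tail_le_exp) auto
  also have "\<dots> = exp (- real L)"
    using a(2) by (simp add: exp_of_nat_mult[symmetric] exp_diff[symmetric] algebra_simps)
  finally have "4 * real N ^ 2 * E \<le> 4 * real N ^ 2 * exp (- real L)"
    by (simp add: mult_left_mono)
  also have "4 * real N ^ 2 * exp (- real L) = exp (ln 4 + 2 * ln (real N)) * exp (- real L)"
  proof -
    have "exp (2 * ln (real N)) = real N ^ 2"
      using N ln_realpow[of "real N" 2] exp_ln[of "real N ^ 2"] by simp
    then show ?thesis by (simp add: exp_add)
  qed
  also have "\<dots> \<le> 1"
  proof -
    have "ln 4 \<le> ln (exp (2::real))" using exp_2_bounds(1) by (subst ln_le_cancel_iff) auto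
    then show ?thesis using L by (simp add: exp_add[symmetric])
  qed
  finally have "(2 * real N * sqrt E)^2 \<le> 1^2"
    unfolding E_def by (simp add: power_mult_distrib sum_nonneg)
  then show ?thesis unfolding E_def by (rule power2_le_imp_le) simp
qed

lemma minimax_risk_ge_inverse_t:
  assumes "0 < t" "estimator \<rho>"
  shows "1 / (8 * real t) \<le> (SUP R\<in>{R. sq_dist R}. risk t N R \<rho>)"
proof -
  have "(1/2) / (2 * real (Suc t)) \<le> (SUP R\<in>{R. sq_dist R}. risk t N R \<rho>)"
    by (rule minimax_risk_ge_moment_matching[OF _ _ _ assms(2)]) simp_all
  moreover have "1 / (8 * real t) \<le> (1/2) / (2 * real (Suc t))"
    using assms(1) by (simp add: field_simps)
  ultimately show ?thesis by linarith
qed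

lemma minimax_risk_ge_inverse_sqrt_t_ln_N:
  assumes t: "0 < t" and N: "2 \<le> N" and est: "estimator \<rho>" and big: "4 * ln (real N) < real t"
  shows "1 / (36 * sqrt (real t * ln (real N))) \<le> (SUP R\<in>{R. sq_dist R}. risk t N R \<rho>)"
proof -
  define l where "l = ln (real N)"
  have "ln 2 \<le> l" using N unfolding l_def by (subst ln_le_cancel_iff) auto
  then have l: "2/3 \<le> l" using ln2_ge_two_thirds by linarith
  define L where "L = nat \<lceil>2*l\<rceil> + 2"
  have L_lower: "2*l + 2 \<le> real L" and L_upper: "real L \<le> 2*l + 3" and L_pos: "1 \<le> L"
    using l unfolding L_def by linarith+
  define a where "a = sqrt (real L / (4 * exp 2 * real t))"
  have a2: "a^2 = real L / (4 * exp 2 * real t)" unfolding a_def using t by simp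
  have a_pos: "0 < a" unfolding a_def using t L_pos by simp
  have "real L \<le> 4 * real t" using L_upper big t unfolding l_def by linarith
  also have "\<dots> \<le> exp 2 * real t" using exp_2_bounds(1) by (intro mult_right_mono) auto
  finally have "a^2 \<le> (1/2)^2" unfolding a2 using t by (simp add: field_simps)
  then have "a \<le> 1/2" by (rule power2_le_imp_le) simp
  moreover have "2 * real N * sqrt (\<Sum>m\<in>{L..t}. real (t choose m) * (4*a^2)^m) \<le> 1"
    using N L_lower a_pos a2 t unfolding l_def
    by (intro binomial_tail_le_inverse_sample_size) auto
  ultimately have risk: "a / (2 * real L) \<le> (SUP R\<in>{R. sq_dist R}. risk t N R \<rho>)"
    using a_pos est L_pos by (intro minimax_risk_ge_moment_matching) auto
  have "(1 / (36 * sqrt (real t * l)))^2 = 1 / (1296 * (real t * l))"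
    using t l by (simp add: power_mult_distrib power_divide)
  also have "\<dots> \<le> 1 / (16 * exp 2 * real t * real L)"
  proof -
    have "16 * exp 2 * real t * real L \<le> 16 * 9 * real t * (7 * l)"
      using exp_2_bounds(2) L_upper l t by (intro mult_mono) auto
    also have "\<dots> \<le> 1296 * (real t * l)" using mult_nonneg_nonneg[of l "real t"] l by simp
    finally show ?thesis using t l exp_2_bounds(1)
      by (intro divide_left_mono mult_pos_pos) (use L_pos in auto)
  qed
  also have "\<dots> = (a / (2 * real L))^2"
    using a2 t L_pos by (simp add: field_simps power2_eq_square)
  finally have "1 / (36 * sqrt (real t * l)) \<le> a / (2 * real L)"
    by (rule power2_le_imp_le) (use a_pos in simp)
  with risk show ?thesis unfolding l_def by linarith
qed

lemma minimax_risk_lower_bound: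
  assumes t: "0 < t" and N: "2 \<le> N" and est: "estimator \<rho>"
  shows "1/72 * max (1 / real t) (1 / sqrt (real t * ln (real N)))
    \<le> (SUP R\<in>{R. sq_dist R}. risk t N R \<rho>)"
proof (cases "real t \<le> 4 * ln (real N)")
  case True
  have tl: "0 < real t * ln (real N)" using t N by simp
  have "(real t / 2)^2 \<le> real t * ln (real N)"
    using True t by (simp add: power2_eq_square field_simps mult_left_mono)
  then have "1 / sqrt (real t * ln (real N)) \<le> 1 / (real t / 2)"
    using t tl by (intro divide_left_mono real_le_rsqrt) auto
  then have "1/72 * max (1 / real t) (1 / sqrt (real t * ln (real N))) \<le> 1 / (8 * real t)"
    using t by (simp add: field_simps)
  then show ?thesis using minimax_risk_ge_inverse_t[OF t est, of N] by linarith
next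
  case False
  have tl: "0 < real t * ln (real N)" using t N by simp
  have "real t * ln (real N) \<le> real t ^ 2"
    using False t by (simp add: power2_eq_square)
  then have "sqrt (real t * ln (real N)) \<le> real t"
    using real_sqrt_le_mono by fastforce
  then have "1 / real t \<le> 1 / sqrt (real t * ln (real N))"
    using t tl by (intro divide_left_mono) auto
  then have "1/72 * max (1 / real t) (1 / sqrt (real t * ln (real N)))
      \<le> 1 / (36 * sqrt (real t * ln (real N)))"
    using tl by (simp add: field_simps)
  then show ?thesis
    using minimax_risk_ge_inverse_sqrt_t_ln_N[OF t N est] False by linarith
qed

text \<open>The restriction on t only serves to exclude N = 1; the bound holds for all t when N \<ge> 2.\<close>
theorem corollary1:
  shows "\<exists>c::real. c > 0 \<and>
    (\<forall>(t::nat) (N::nat). 0 < t \<longrightarrow> 0 < N \<longrightarrow>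
       real t \<le> real N powr (2 * (exp 4 - 1)) / 36 \<longrightarrow>
       (\<forall>\<rho>. estimator \<rho> \<longrightarrow>
          (SUP R\<in>{R. sq_dist R}. risk t N R \<rho>)
            \<ge> c * max (1 / real t) (1 / sqrt (real t * ln (real N)))))"
proof (intro exI[of _ "1/72"] conjI allI impI)
  fix t N :: nat and \<rho>
  assume t: "0 < t" and "0 < N" and t_le: "real t \<le> real N powr (2 * (exp 4 - 1)) / 36"
    and est: "estimator \<rho>"
  have "N \<noteq> 1" using t t_le by auto
  with \<open>0 < N\<close> have "2 \<le> N" by simp
  then show "1/72 * max (1 / real t) (1 / sqrt (real t * ln (real N)))
      \<le> (SUP R\<in>{R. sq_dist R}. risk t N R \<rho>)"
    by (rule minimax_risk_lower_bound[OF t _ est])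
qed simp

end
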